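(* Let $\tau\ge1$ be an integer, $h(z;\lambda)=z^{\tau+1}-z^{\tau}+\lambda$, $\bar\lambda_\tau=2\sin\!\left(\frac{\pi}{2}\cdot\frac{1}{2\tau+1}\right)$, and $\rho(\lambda)=\max\{|z|: z\in\mathbb C,\ h(z;\lambda)=0\}$. Then there exists $\lambda_{\mathrm{th}}\in[0,\bar\lambda_\tau]$ such that $\rho$ is decreasing on $(0,\lambda_{\mathrm{th}})$ and increasing on $(\lambda_{\mathrm{th}},\bar\lambda_\tau)$. Consequently, if $K\in\mathbb R^{N\times N}$ is symmetric with eigenvalues $0=\lambda_1<\lambda_2\le\dots\le\lambda_N<\bar\lambda_\tau$, then the convergence rate $R=\max\{\rho(\lambda):\lambda\in\operatorname{spec}(K)\setminus\{0\}\}$ of $x(k+1)=x(k)-Kx(k-\tau)$ satisfies $R=\max\{\rho(\lambda_2),\rho(\lambda_N)\}$.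
   Context: The convergence rate of the delayed consensus dynamics $x(k+1)=x(k)-Kx(k-\tau)$ is defined as the second largest eigenvalue modulus of the augmented delay-free state matrix, whose spectrum is the union over eigenvalues $\lambda$ of $K$ of the roots of $h(z;\lambda)$; the eigenvalue $0$ of $K$ contributes the root $z=1$ (and $z=0$ with multiplicity $\tau$), which is excluded. *)

theory Defs
  imports "HOL-Analysis.Analysis" "HOL-Computational_Algebra.Polynomial"
begin

definition hpoly :: "nat \<Rightarrow> real \<Rightarrow> complex poly" where
  "hpoly tau lam = monom 1 (tau + 1) - monom 1 tau + [:complex_of_real lam:]"

definition rho :: "nat \<Rightarrow> real \<Rightarrow> real" where
  "rho tau lam = Max ((\<lambda>z. cmod z) ` {z. poly (hpoly tau lam) z = 0})"

definition lambda_bar :: "nat \<Rightarrow> real" where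
  "lambda_bar tau = 2 * sin (pi / 2 * (1 / (2 * real tau + 1)))"

definition mat_spec :: "real^'n^'n \<Rightarrow> real set" where
  "mat_spec K = {l. \<exists>v. v \<noteq> 0 \<and> K *v v = l *\<^sub>R v}"

text \<open>Convergence rate of x(k+1) = x(k) - K x(k - tau).\<close>
definition conv_rate :: "nat \<Rightarrow> real^'n^'n \<Rightarrow> real" where
  "conv_rate tau K = Max (rho tau ` (mat_spec K - {0}))"

end

theory Submission
  imports Defs
begin

text \<open>For \<open>0 < \<lambda> \<le> lambda_th = \<tau>^\<tau> / (\<tau> + 1)^(\<tau> + 1)\<close> the dominant root of \<open>h(\<cdot>; \<lambda>)\<close> is the real
  root \<open>r \<in> [\<tau>/(\<tau> + 1), 1)\<close> of \<open>r^\<tau> (1 - r) = \<lambda>\<close>, which decreases as \<open>\<lambda>\<close> grows.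
  For \<open>lambda_th < \<lambda> < lambda_bar \<tau>\<close> write \<open>\<lambda> = r(\<theta>)^\<tau> sin \<theta> / sin ((\<tau> + 1) \<theta>)\<close> with
  \<open>r(\<theta>) = sin (\<tau> \<theta>) / sin ((\<tau> + 1) \<theta>)\<close> and \<open>0 < \<theta> \<le> \<pi> / (2\<tau> + 1)\<close>: then \<open>r(\<theta>) e^(\<plusminus>i\<theta>)\<close>
  are roots, and after dividing them out the remaining factor has decreasing nonnegative
  coefficients, so by the Enestrom--Kakeya theorem no root is larger. As \<open>r\<close> increases with
  \<open>\<theta>\<close> and \<open>\<lambda>(\<theta>) \<rightarrow> lambda_th\<close> for \<open>\<theta> \<rightarrow> 0\<close>, the intermediate value theorem shows that
  \<open>\<rho>\<close> increases on this range. Hence \<open>\<rho>\<close> is quasi-convex on \<open>(0, lambda_bar \<tau>)\<close>, and on the finite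
  nonzero spectrum of a symmetric \<open>K\<close> (nonempty by the Rayleigh principle) its maximum is
  attained at the smallest or the largest eigenvalue.\<close>

section \<open>The real root regime\<close>

lemma poly_hpoly [simp]: "poly (hpoly tau lam) z = z ^ (tau + 1) - z ^ tau + complex_of_real lam"
  by (simp add: hpoly_def poly_monom)

lemma hpoly_nonzero: "hpoly tau lam \<noteq> 0"
proof
  assume "hpoly tau lam = 0"
  then have "coeff (hpoly tau lam) (tau + 1) = 0" by simp
  moreover have "coeff (hpoly tau lam) (tau + 1) = 1"
    by (simp add: hpoly_def coeff_monom)
  ultimately show False by simp
qed

lemma rho_eqI:
  assumes "poly (hpoly tau lam) z0 = 0" "cmod z0 = r"
    and "\<And>z. poly (hpoly tau lam) z = 0 \<Longrightarrow> cmod z \<le> r"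
  shows "rho tau lam = r"
  unfolding rho_def
  by (rule Max_eqI) (use poly_roots_finite[OF hpoly_nonzero] assms in auto)

definition lambda_th :: "nat \<Rightarrow> real" where
  "lambda_th tau = real tau ^ tau / (real tau + 1) ^ (tau + 1)"

lemma hpoly_factor_real_root:
  fixes tau :: nat and r :: real and z S :: complex
  defines "S \<equiv> \<Sum>i<tau. complex_of_real r ^ (tau - Suc i) * z ^ i"
  shows "z ^ (tau + 1) - z ^ tau + complex_of_real (r ^ tau * (1 - r))
       = (z - r) * (z ^ tau - (1 - r) * S)"
proof -
  have "(z - r) * (z ^ tau - (1 - r) * S) = z * z ^ tau - r * z ^ tau - (1 - r) * ((z - r) * S)"
    by (simp add: algebra_simps)
  also have "(z - r) * S = z ^ tau - complex_of_real r ^ tau"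
    unfolding S_def by (rule power_diff_sumr2[symmetric])
  finally show ?thesis by (simp add: algebra_simps)
qed

text \<open>Dividing out the real root \<open>r\<close> leaves \<open>z^\<tau> = (1 - r) S(z)\<close> with \<open>|S(z)| \<le> \<tau> |z|^(\<tau>-1)\<close>
  outside the disc of radius \<open>r\<close>, which forces \<open>|z| \<le> (1 - r) \<tau> \<le> r\<close>.\<close>

lemma hpoly_root_norm_le_real_root:
  assumes tau: "tau \<ge> 1" and r: "real tau / (tau + 1) \<le> r" "r < 1"
    and root: "poly (hpoly tau (r ^ tau * (1 - r))) z = 0"
  shows "cmod z \<le> r"
proof (rule ccontr)
  assume "\<not> cmod z \<le> r"
  then have zr: "r < cmod z" by simp
  have "0 < real tau / (tau + 1)" using tau by simp
  then have rpos: "0 < r" using r by linarith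
  define S where "S = (\<Sum>i<tau. complex_of_real r ^ (tau - Suc i) * z ^ i)"
  have "z \<noteq> complex_of_real r" using zr rpos by auto
  then have zS: "z ^ tau = (1 - r) * S"
    using root hpoly_factor_real_root[where tau=tau and r=r and z=z] by (simp add: S_def)
  have "cmod S \<le> (\<Sum>i<tau. r ^ (tau - Suc i) * cmod z ^ i)"
    unfolding S_def
    by (rule order_trans[OF norm_sum]) (simp add: norm_mult norm_power abs_of_pos[OF rpos])
  also have "\<dots> \<le> (\<Sum>i<tau. cmod z ^ (tau - Suc i) * cmod z ^ i)"
    by (intro sum_mono mult_right_mono power_mono) (use zr rpos in auto)
  also have "\<dots> = tau * cmod z ^ (tau - 1)"
    by (simp add: power_add[symmetric])
  finally have S_bound: "cmod S \<le> tau * cmod z ^ (tau - 1)" .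
  have "cmod (complex_of_real (1 - r)) = 1 - r"
    using r by (simp only: norm_of_real)
  then have "cmod z ^ tau = (1 - r) * cmod S"
    using arg_cong[OF zS, of cmod] by (simp only: norm_mult norm_power)
  then have "cmod z * cmod z ^ (tau - 1) = (1 - r) * cmod S"
    using tau by (cases tau) simp_all
  also have "\<dots> \<le> ((1 - r) * tau) * cmod z ^ (tau - 1)"
    using S_bound r by (simp add: mult_left_mono)
  finally have "cmod z * cmod z ^ (tau - 1) \<le> ((1 - r) * tau) * cmod z ^ (tau - 1)" .
  moreover have "0 < cmod z ^ (tau - 1)"
    using zr rpos by (intro zero_less_power) linarith
  ultimately have "cmod z \<le> (1 - r) * tau"
    by (simp add: mult_le_cancel_right)
  moreover have "(1 - r) * tau \<le> r" using r by (simp add: field_simps)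
  ultimately show False using zr by simp
qed

lemma power_mult_one_minus_strict_decreasing:
  fixes x y :: real
  assumes tau: "tau \<ge> 1" and xy: "real tau / (tau + 1) \<le> x" "x < y"
  shows "y ^ tau * (1 - y) < x ^ tau * (1 - x)"
proof -
  have "(\<lambda>t. - (t ^ tau * (1 - t))) x < (\<lambda>t. - (t ^ tau * (1 - t))) y"
  proof (rule DERIV_pos_imp_increasing_open[OF xy(2)])
    fix t assume t: "x < t" "t < y"
    have "real tau \<le> (tau + 1) * x" using xy by (simp add: field_simps)
    also have "\<dots> < (tau + 1) * t" using t by (intro mult_strict_left_mono) auto
    finally have "real tau < (tau + 1) * t" .
    moreover have tpos: "0 < t" using t xy tau
      by (smt (verit) divide_nonneg_nonneg of_nat_0_le_iff)
    ultimately have pos: "0 < t ^ (tau - 1) * ((tau + 1) * t - tau)" by simp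
    have "t ^ tau = t * t ^ (tau - 1)" using tau by (cases tau) auto
    then have eq: "- (real tau * t ^ (tau - 1) * (1 - t) - t ^ tau) = t ^ (tau - 1) * ((tau + 1) * t - tau)"
      by (simp add: algebra_simps)
    have "((\<lambda>t. - (t ^ tau * (1 - t))) has_real_derivative
        - (real tau * t ^ (tau - 1) * (1 - t) - t ^ tau)) (at t)"
      by (auto intro!: derivative_eq_intros)
    then show "\<exists>d. ((\<lambda>t. - (t ^ tau * (1 - t))) has_real_derivative d) (at t) \<and> 0 < d"
      using pos unfolding eq by blast
  qed (intro continuous_intros)
  then show ?thesis by simp
qed

lemma lambda_th_eq: "(real tau / (tau + 1)) ^ tau * (1 - real tau / (tau + 1)) = lambda_th tau"
proof -
  have "1 - real tau / (tau + 1) = 1 / (tau + 1)" by (simp add: field_simps)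
  then show ?thesis by (simp add: lambda_th_def power_divide field_simps)
qed

lemma real_root_exists:
  assumes "0 < lam" "lam \<le> lambda_th tau"
  obtains r where "real tau / (tau + 1) \<le> r" "r < 1" "lam = r ^ tau * (1 - r)"
proof -
  have "\<exists>x\<ge>real tau / (tau + 1). x \<le> 1 \<and> x ^ tau * (1 - x) = lam"
    by (rule IVT2'[of "\<lambda>x. x ^ tau * (1 - x)"])
      (use assms lambda_th_eq[of tau] in \<open>auto intro!: continuous_intros\<close>)
  then obtain r where r: "real tau / (tau + 1) \<le> r" "r \<le> 1" "r ^ tau * (1 - r) = lam" by auto
  moreover have "r \<noteq> 1" using r assms by auto
  ultimately show thesis using that by auto
qed

lemma rho_real_root:
  assumes tau: "tau \<ge> 1" and r: "real tau / (tau + 1) \<le> r" "r < 1"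
  shows "rho tau (r ^ tau * (1 - r)) = r"
proof (rule rho_eqI)
  show "poly (hpoly tau (r ^ tau * (1 - r))) (complex_of_real r) = 0"
    by (simp add: algebra_simps)
  have "0 \<le> r" using r(1) by (smt (verit) divide_nonneg_nonneg of_nat_0_le_iff)
  then show "cmod (complex_of_real r) = r" by simp
qed (use hpoly_root_norm_le_real_root[OF tau r] in blast)

lemma rho_strict_decreasing:
  assumes tau: "tau \<ge> 1" and ab: "0 < a" "a < b" "b \<le> lambda_th tau"
  shows "rho tau b < rho tau a"
proof -
  obtain ra where ra: "real tau / (tau + 1) \<le> ra" "ra < 1" "a = ra ^ tau * (1 - ra)"
    using real_root_exists[of a tau] ab by auto
  obtain rb where rb: "real tau / (tau + 1) \<le> rb" "rb < 1" "b = rb ^ tau * (1 - rb)"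
    using real_root_exists[of b tau] ab by auto
  have "rb < ra"
  proof (rule ccontr)
    assume "\<not> rb < ra"
    then have "b \<le> a"
      using power_mult_one_minus_strict_decreasing[OF tau ra(1), of rb] ra(3) rb(3)
      by (cases "ra = rb") auto
    then show False using ab by simp
  qed
  then show ?thesis using rho_real_root[OF tau ra(1,2)] rho_real_root[OF tau rb(1,2)] ra rb by simp
qed

section \<open>The Enestrom--Kakeya theorem\<close>

text \<open>\<open>horner b n y = b 0 * y ^ (n - 1) + b 1 * y ^ (n - 2) + \<dots> + b (n - 1)\<close>.\<close>

primrec horner :: "(nat \<Rightarrow> real) \<Rightarrow> nat \<Rightarrow> complex \<Rightarrow> complex" where
  "horner b 0 y = 0"
| "horner b (Suc n) y = y * horner b n y + complex_of_real (b n)"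

text \<open>The left-hand side is \<open>\<Sum>k = 1..n-1. (b k - b (k - 1)) y^(n-k)\<close>, a sum of terms whose
  coefficients have total absolute value \<open>1 - b (n - 1)\<close>.\<close>

lemma enestrom_kakeya_bound:
  fixes b :: "nat \<Rightarrow> real" and y :: complex
  assumes b0: "b 0 = 1" and decr: "\<And>m. m + 1 < n \<Longrightarrow> b (m + 1) \<le> b m"
    and n: "n \<ge> 1" and y: "cmod y \<ge> 1"
  shows "cmod ((y - 1) * horner b n y - y ^ n + b (n - 1)) \<le> (1 - b (n - 1)) * cmod y ^ (n - 1)"
  using n decr
proof (induction n rule: dec_induct)
  case base
  then show ?case using b0 by (simp add: algebra_simps)
next
  case (step n)
  have IH: "cmod ((y - 1) * horner b n y - y ^ n + b (n - 1)) \<le> (1 - b (n - 1)) * cmod y ^ (n - 1)"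
    using step by auto
  have mon: "b n \<le> b (n - 1)" using step.prems[of "n - 1"] step.hyps by auto
  have eq: "(y - 1) * horner b (Suc n) y - y ^ Suc n + b (Suc n - 1)
        = y * (((y - 1) * horner b n y - y ^ n + b (n - 1)) + complex_of_real (b n - b (n - 1)))"
    by (simp add: algebra_simps)
  have "cmod ((y - 1) * horner b (Suc n) y - y ^ Suc n + b (Suc n - 1))
       \<le> cmod y * (cmod ((y - 1) * horner b n y - y ^ n + b (n - 1)) + (b (n - 1) - b n))"
    unfolding eq norm_mult
  proof (intro mult_left_mono order_trans[OF norm_triangle_ineq] add_left_mono)
    show "cmod (complex_of_real (b n - b (n - 1))) \<le> b (n - 1) - b n"
      using mon by (simp only: norm_of_real)
  qed simp
  also have "\<dots> \<le> cmod y * ((1 - b (n - 1)) * cmod y ^ (n - 1) + (b (n - 1) - b n) * cmod y ^ (n - 1))"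
  proof -
    have "1 \<le> cmod y ^ (n - 1)" using y by (simp add: one_le_power)
    then have "b (n - 1) - b n \<le> (b (n - 1) - b n) * cmod y ^ (n - 1)"
      using mon by (simp add: mult_le_cancel_left1)
    then show ?thesis using IH by (intro mult_left_mono) auto
  qed
  also have "\<dots> = (1 - b (Suc n - 1)) * cmod y ^ (Suc n - 1)"
    using step.hyps by (cases n) (auto simp: algebra_simps)
  finally show ?case .
qed

lemma enestrom_kakeya:
  fixes b :: "nat \<Rightarrow> real" and y :: complex
  assumes b0: "b 0 = 1" and decr: "\<And>m. m + 1 < n \<Longrightarrow> b (m + 1) \<le> b m"
    and nonneg: "b (n - 1) \<ge> 0" and n: "n \<ge> 1" and y: "cmod y > 1"
  shows "horner b n y \<noteq> 0"
proof
  assume "horner b n y = 0"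
  then have "cmod (complex_of_real (b (n - 1)) - y ^ n) \<le> (1 - b (n - 1)) * cmod y ^ (n - 1)"
    using enestrom_kakeya_bound[OF b0 decr n less_imp_le[OF y]] by simp
  moreover have "cmod y ^ n - b (n - 1) \<le> cmod (complex_of_real (b (n - 1)) - y ^ n)"
    using norm_triangle_ineq2[of "y ^ n" "complex_of_real (b (n - 1))"] nonneg
    by (simp add: norm_power norm_minus_commute)
  moreover have "b (n - 1) * 1 \<le> b (n - 1) * cmod y ^ (n - 1)"
    using y nonneg by (intro mult_left_mono) (simp_all add: one_le_power)
  moreover have "(1 - b (n - 1)) * cmod y ^ (n - 1) = cmod y ^ (n - 1) - b (n - 1) * cmod y ^ (n - 1)"
    by (simp add: algebra_simps)
  ultimately have "cmod y ^ n \<le> cmod y ^ (n - 1)" by linarith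
  moreover have "cmod y ^ (n - 1) < cmod y ^ n" using y n by (intro power_strict_increasing) auto
  ultimately show False by simp
qed

lemma quadratic_mult_horner:
  fixes b :: "nat \<Rightarrow> real" and y :: complex and c q :: real
  assumes b0: "b 0 = 1" and b1: "b 1 = 2 * c - q"
    and rec: "\<And>m. b (m + 2) = 2 * c * b (m + 1) - b m" and n: "n \<ge> 1"
  shows "(y ^ 2 - 2 * c * y + 1) * horner b n y = y ^ (n + 1) - q * y ^ n - b n * y + b (n - 1)"
  using n
proof (induction n rule: dec_induct)
  case base
  have b1': "complex_of_real (b (Suc 0)) = 2 * c - q"
    by (metis b1 One_nat_def of_real_diff of_real_mult of_real_numeral)
  show ?case using b0 by (simp add: algebra_simps power2_eq_square b1')
next
  case (step n)
  have r: "b (Suc n) = 2 * c * b n - b (n - 1)" using rec[of "n - 1"] step.hyps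
    by (cases n) auto
  have "(y ^ 2 - 2 * c * y + 1) * horner b (Suc n) y
      = y * ((y ^ 2 - 2 * c * y + 1) * horner b n y) + (y ^ 2 - 2 * c * y + 1) * b n"
    by (simp add: algebra_simps)
  also have "\<dots> = y * (y ^ (n + 1) - q * y ^ n - b n * y + b (n - 1)) + (y ^ 2 - 2 * c * y + 1) * b n"
    using step.IH by simp
  also have "\<dots> = y ^ (Suc n + 1) - q * y ^ Suc n - b (Suc n) * y + b (Suc n - 1)"
    by (simp add: r algebra_simps power2_eq_square)
  finally show ?case .
qed

section \<open>The complex root regime\<close>

definition angle_max :: "nat \<Rightarrow> real" where
  "angle_max tau = pi / (2 * real tau + 1)"

text \<open>For \<open>0 < \<theta> \<le> angle_max \<tau>\<close>, the polynomial \<open>h(\<cdot>; lambda_of_angle \<tau> \<theta>)\<close> has the roots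
  \<open>root_radius \<tau> \<theta> * e^(\<plusminus>i\<theta>)\<close>; after scaling by \<open>root_radius \<tau> \<theta>\<close> and dividing out the quadratic
  factor, the quotient has the coefficients \<open>quotient_coeff \<tau> \<theta> m\<close>.\<close>

definition root_radius :: "nat \<Rightarrow> real \<Rightarrow> real" where
  "root_radius tau th = sin (real tau * th) / sin (real (tau + 1) * th)"

definition lambda_of_angle :: "nat \<Rightarrow> real \<Rightarrow> real" where
  "lambda_of_angle tau th = root_radius tau th ^ tau * sin th / sin (real (tau + 1) * th)"

definition quotient_coeff :: "nat \<Rightarrow> real \<Rightarrow> nat \<Rightarrow> real" where
  "quotient_coeff tau th m =
     (sin (real (m + 1) * th) - sin (real (tau + 1) * th) / sin (real tau * th) * sin (real m * th))
     / sin th"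

lemma angle_max_bounds:
  assumes tau: "tau \<ge> 1" and th: "0 < th" "th \<le> angle_max tau"
  shows "real tau * th < pi / 2" "real (tau + 1) * th < pi" "sin th > 0"
    "sin (real tau * th) > 0" "sin (real (tau + 1) * th) > 0"
proof -
  have "real tau * th \<le> real tau * (pi / (2 * real tau + 1))"
    using th by (intro mult_left_mono) (auto simp: angle_max_def)
  also have "\<dots> < pi / 2" using tau by (simp add: field_simps)
  finally show small: "real tau * th < pi / 2" .
  have "real (tau + 1) * th \<le> real (tau + 1) * (pi / (2 * real tau + 1))"
    using th by (intro mult_left_mono) (auto simp: angle_max_def)
  also have "\<dots> < pi" using tau by (simp add: field_simps)
  finally show small': "real (tau + 1) * th < pi" .
  have "th \<le> real tau * th" using tau th by simp
  then have "th < pi" using small pi_gt_zero by linarith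
  then show "sin th > 0" using th by (intro sin_gt_zero) auto
  have "real tau * th < pi" using small pi_gt_zero by linarith
  then show "sin (real tau * th) > 0" using tau th by (intro sin_gt_zero) auto
  show "sin (real (tau + 1) * th) > 0" using small' th by (intro sin_gt_zero) auto
qed

lemma sin_mult_Suc_Suc:
  "sin (real (m + 2) * th) = 2 * cos th * sin (real (m + 1) * th) - sin (real m * th)"
proof -
  have a: "real (m + 2) * th = real (m + 1) * th + th" by (simp add: algebra_simps)
  have b: "real m * th = real (m + 1) * th - th" by (simp add: algebra_simps)
  show ?thesis unfolding a b sin_add sin_diff by (simp add: algebra_simps)
qed

lemma quotient_coeff_rec:
  "quotient_coeff tau th (m + 2) = 2 * cos th * quotient_coeff tau th (m + 1) - quotient_coeff tau th m"
proof -
  define q where "q = sin (real (tau + 1) * th) / sin (real tau * th)"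
  have s3: "sin (real (m + 3) * th) = 2 * cos th * sin (real (m + 2) * th) - sin (real (m + 1) * th)"
    using sin_mult_Suc_Suc[of "m + 1" th] by (simp add: add.assoc numeral_3_eq_3 numeral_2_eq_2)
  have "sin (real (m + 3) * th) - q * sin (real (m + 2) * th)
      = 2 * cos th * (sin (real (m + 2) * th) - q * sin (real (m + 1) * th))
        - (sin (real (m + 1) * th) - q * sin (real m * th))"
    unfolding s3 sin_mult_Suc_Suc[of m th] by (simp add: algebra_simps)
  then show ?thesis
    unfolding quotient_coeff_def q_def[symmetric]
    by (simp add: numeral_3_eq_3 numeral_2_eq_2 add.assoc diff_divide_distrib right_diff_distrib)
qed

lemma quotient_coeff_0: "sin th \<noteq> 0 \<Longrightarrow> quotient_coeff tau th 0 = 1"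
  by (simp add: quotient_coeff_def)

lemma quotient_coeff_1:
  assumes "sin th \<noteq> 0"
  shows "quotient_coeff tau th 1 = 2 * cos th - sin (real (tau + 1) * th) / sin (real tau * th)"
proof -
  have "sin (real (1 + 1) * th) = 2 * sin th * cos th"
    using sin_double[of th] by simp
  then show ?thesis using assms by (simp add: quotient_coeff_def field_simps)
qed

lemma quotient_coeff_last: "sin (real tau * th) \<noteq> 0 \<Longrightarrow> quotient_coeff tau th tau = 0"
  by (simp add: quotient_coeff_def)

lemma sin_product_telescope:
  fixes u v t :: real
  shows "sin (u + v) * (sin (u + t) - sin (u + 2 * t)) + sin (u + v + t) * (sin (u + t) - sin u)
       = sin t * (sin v - sin (v - t))"
proof -
  have "sin (u + 2 * t) = sin (u + t + t)" by (simp add: algebra_simps)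
  moreover have "cos (t * 2 - v) = cos (v - t * 2)" "cos (t - v) = cos (v - t)"
    by (metis cos_minus minus_diff_eq)+
  ultimately show ?thesis
    unfolding sin_times_sin right_diff_distrib
    by (simp add: algebra_simps) (simp add: field_simps)
qed

lemma quotient_coeff_decreasing:
  assumes tau: "tau \<ge> 1" and th: "0 < th" "th \<le> angle_max tau" and m: "m < tau"
  shows "quotient_coeff tau th (m + 1) \<le> quotient_coeff tau th m"
proof -
  note bounds = angle_max_bounds[OF tau th]
  define u where "u = real m * th"
  define v where "v = real (tau - m) * th"
  have e1: "real tau * th = u + v" using m by (simp add: u_def v_def algebra_simps of_nat_diff)
  have e2: "real (tau + 1) * th = u + v + th" using e1 by (simp add: algebra_simps)
  have e3: "real (m + 1) * th = u + th" by (simp add: u_def algebra_simps)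
  have e4: "real (m + 1 + 1) * th = u + 2 * th" by (simp add: u_def algebra_simps)
  have "sin (real tau * th) * (quotient_coeff tau th m - quotient_coeff tau th (m + 1)) * sin th
      = sin (u + v) * (sin (u + th) - sin (u + 2 * th)) + sin (u + v + th) * (sin (u + th) - sin u)"
    using bounds(3,4) unfolding quotient_coeff_def e1 e2 e3 e4 u_def[symmetric]
    by (simp add: field_simps)
  also have "\<dots> = sin th * (sin v - sin (v - th))" by (rule sin_product_telescope)
  finally have "sin (real tau * th) * (quotient_coeff tau th m - quotient_coeff tau th (m + 1))
      = sin v - sin (v - th)"
    using bounds(3) by simp
  moreover have "sin (v - th) \<le> sin v"
  proof (rule sin_monotone_2pi_le)
    have "th \<le> v" using m th by (simp add: v_def of_nat_diff)
    then show "- (pi / 2) \<le> v - th" using pi_gt_zero by linarith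
    have "v \<le> real tau * th" using th by (simp add: v_def of_nat_diff)
    then show "v \<le> pi / 2" using bounds(1) by simp
  qed (use th in simp)
  ultimately have "0 \<le> sin (real tau * th) * (quotient_coeff tau th m - quotient_coeff tau th (m + 1))"
    by simp
  then show ?thesis using bounds(4) by (simp add: zero_le_mult_iff)
qed

lemma sin_diff_mult_sin_add: "sin (a - b) * sin (a + b) = sin a ^ 2 - sin (b :: real) ^ 2"
proof -
  have "sin (a - b) * sin (a + b) = sin a ^ 2 * cos b ^ 2 - cos a ^ 2 * sin b ^ 2"
    unfolding sin_diff sin_add by (simp add: power2_eq_square algebra_simps)
  also have "\<dots> = sin a ^ 2 - sin b ^ 2"
    by (simp add: cos_squared_eq algebra_simps)
  finally show ?thesis .
qed

lemma lambda_of_angle_eq: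
  assumes tau: "tau \<ge> 1" and th: "0 < th" "th \<le> angle_max tau"
  shows "lambda_of_angle tau th = root_radius tau th ^ (tau + 1) * quotient_coeff tau th (tau - 1)"
proof -
  note bounds = angle_max_bounds[OF tau th]
  define A where "A = real tau * th"
  have a1: "real (tau + 1) * th = A + th" by (simp add: A_def algebra_simps)
  have a2: "real (tau - 1 + 1) * th = A" using tau by (simp add: A_def)
  have a3: "real (tau - 1) * th = A - th" using tau by (simp add: A_def of_nat_diff algebra_simps)
  have "sin A > 0" "sin (A + th) > 0" using bounds(4,5) a1 by (simp_all add: A_def)
  then have "root_radius tau th * quotient_coeff tau th (tau - 1)
      = (sin A ^ 2 - sin (A - th) * sin (A + th)) / (sin (A + th) * sin th)"
    unfolding root_radius_def quotient_coeff_def a1 a2 a3 A_def[symmetric]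
    using bounds(3) by (simp add: field_simps power2_eq_square)
  also have "\<dots> = sin th / sin (A + th)"
    using bounds(3) by (simp add: sin_diff_mult_sin_add power2_eq_square)
  finally have "root_radius tau th * quotient_coeff tau th (tau - 1) = sin th / sin (A + th)" .
  then have "root_radius tau th ^ (tau + 1) * quotient_coeff tau th (tau - 1)
      = root_radius tau th ^ tau * (sin th / sin (A + th))"
    by (metis power_Suc2 mult.assoc Suc_eq_plus1)
  then show ?thesis
    unfolding lambda_of_angle_def a1 by simp
qed

lemma cis_quadratic_factor:
  "y ^ 2 - 2 * complex_of_real (cos th) * y + 1 = (y - cis th) * (y - cis (- th))"
proof -
  have "cis th + cis (- th) = 2 * complex_of_real (cos th)"
    by (simp add: complex_eq_iff)
  moreover have "cis th * cis (- th) = 1" by (simp add: cis_mult)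
  ultimately show ?thesis
    by (simp add: algebra_simps power2_eq_square)
      (metis (no_types, lifting) add.commute distrib_left mult.commute)
qed

lemma hpoly_factor_angle:
  assumes tau: "tau \<ge> 1" and th: "0 < th" "th \<le> angle_max tau"
  defines "r \<equiv> root_radius tau th"
  shows "poly (hpoly tau (lambda_of_angle tau th)) z =
     complex_of_real r ^ (tau + 1) *
       (((z / r) ^ 2 - 2 * complex_of_real (cos th) * (z / r) + 1) * horner (quotient_coeff tau th) tau (z / r))"
proof -
  note bounds = angle_max_bounds[OF tau th]
  define q where "q = sin (real (tau + 1) * th) / sin (real tau * th)"
  have sn: "sin th \<noteq> 0" using bounds(3) by simp
  have rpos: "r > 0" using bounds(4,5) by (simp add: r_def root_radius_def)
  have qr: "q * r = 1" using bounds(4,5) by (simp add: r_def root_radius_def q_def)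
  define y where "y = z / complex_of_real r"
  have z: "z = complex_of_real r * y" using rpos by (simp add: y_def)
  have "(y ^ 2 - 2 * complex_of_real (cos th) * y + 1) * horner (quotient_coeff tau th) tau y
      = y ^ (tau + 1) - q * y ^ tau - quotient_coeff tau th tau * y + quotient_coeff tau th (tau - 1)"
    using quadratic_mult_horner[where b = "quotient_coeff tau th" and c = "cos th" and q = q,
        OF quotient_coeff_0[where tau = tau, OF sn] quotient_coeff_1[where tau = tau, OF sn, folded q_def]
          quotient_coeff_rec tau]
    by simp
  also have "\<dots> = y ^ (tau + 1) - q * y ^ tau + quotient_coeff tau th (tau - 1)"
    using quotient_coeff_last bounds(4) by simp
  finally have P: "(y ^ 2 - 2 * complex_of_real (cos th) * y + 1) * horner (quotient_coeff tau th) tau y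
      = y ^ (tau + 1) - q * y ^ tau + quotient_coeff tau th (tau - 1)" .
  have "complex_of_real r ^ (tau + 1) * (y ^ (tau + 1) - q * y ^ tau + quotient_coeff tau th (tau - 1))
    = (r * y) ^ (tau + 1) - complex_of_real (q * r) * (r * y) ^ tau
      + complex_of_real (r ^ (tau + 1) * quotient_coeff tau th (tau - 1))"
    by (simp add: algebra_simps power_mult_distrib)
  also have "\<dots> = poly (hpoly tau (lambda_of_angle tau th)) z"
    unfolding qr lambda_of_angle_eq[OF tau th, folded r_def] z by simp
  finally show ?thesis using P by (simp add: y_def)
qed

lemma rho_lambda_of_angle:
  assumes tau: "tau \<ge> 1" and th: "0 < th" "th \<le> angle_max tau"
  shows "rho tau (lambda_of_angle tau th) = root_radius tau th"
proof -
  note bounds = angle_max_bounds[OF tau th]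
  define r where "r = root_radius tau th"
  have rpos: "r > 0" using bounds(4,5) by (simp add: r_def root_radius_def)
  have coeff_last: "quotient_coeff tau th (tau - 1) \<ge> 0"
    using quotient_coeff_decreasing[OF tau th, of "tau - 1"] quotient_coeff_last[of tau th] bounds(4) tau
    by simp
  show ?thesis
  proof (rule rho_eqI[of tau _ "complex_of_real r * cis th"])
    show "poly (hpoly tau (lambda_of_angle tau th)) (complex_of_real r * cis th) = 0"
      unfolding hpoly_factor_angle[OF tau th] using rpos
      by (simp add: r_def[symmetric] cis_quadratic_factor)
    show "cmod (complex_of_real r * cis th) = root_radius tau th"
      using rpos by (simp add: norm_mult r_def)
  next
    fix z assume root: "poly (hpoly tau (lambda_of_angle tau th)) z = 0"
    show "cmod z \<le> root_radius tau th"
    proof (rule ccontr)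
      assume "\<not> cmod z \<le> root_radius tau th"
      then have y: "cmod (z / r) > 1" using rpos by (simp add: r_def norm_divide)
      then have "(z / r) ^ 2 - 2 * complex_of_real (cos th) * (z / r) + 1 \<noteq> 0"
        unfolding cis_quadratic_factor by auto
      moreover have "horner (quotient_coeff tau th) tau (z / r) \<noteq> 0"
        using enestrom_kakeya[OF quotient_coeff_0 _ coeff_last tau y] bounds(3)
          quotient_coeff_decreasing[OF tau th] by simp
      ultimately show False
        using root rpos unfolding hpoly_factor_angle[OF tau th] r_def by simp
    qed
  qed
qed

lemma abs_sin_Suc_mult_le:
  fixes x :: real assumes "0 \<le> sin x"
  shows "\<bar>sin (real (Suc n) * x)\<bar> \<le> \<bar>sin (real n * x)\<bar> + sin x"
proof -
  have "sin (real (Suc n) * x) = sin (real n * x) * cos x + cos (real n * x) * sin x"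
    by (simp add: distrib_right sin_add)
  then have "\<bar>sin (real (Suc n) * x)\<bar> \<le> \<bar>sin (real n * x)\<bar> * \<bar>cos x\<bar> + \<bar>cos (real n * x)\<bar> * sin x"
    using assms abs_triangle_ineq[of "sin (real n * x) * cos x" "cos (real n * x) * sin x"]
    by (simp add: abs_mult)
  also have "\<dots> \<le> \<bar>sin (real n * x)\<bar> + sin x"
    using assms by (intro add_mono mult_left_le mult_left_le_one_le) (auto simp: abs_cos_le_one)
  finally show ?thesis .
qed

lemma abs_sin_mult_less:
  fixes x :: real assumes x: "0 < x" "x < pi" and n: "n \<ge> 2"
  shows "\<bar>sin (real n * x)\<bar> < real n * sin x"
  using n
proof (induction n rule: dec_induct)
  case base
  have sx: "sin x > 0" using x by (intro sin_gt_zero) auto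
  then have "cos x ^ 2 < 1" by (simp add: cos_squared_eq)
  then have "\<bar>cos x\<bar> < 1" by (simp add: abs_square_less_1)
  then show ?case using sx by (simp add: sin_double abs_mult)
next
  case (step n)
  have "sin x > 0" using x by (intro sin_gt_zero) auto
  then have "\<bar>sin (real (Suc n) * x)\<bar> \<le> \<bar>sin (real n * x)\<bar> + sin x"
    by (intro abs_sin_Suc_mult_le) simp
  also have "\<dots> < real (Suc n) * sin x" using step by (simp add: algebra_simps)
  finally show ?case .
qed

text \<open>The numerator of the derivative is \<open>((2\<tau> + 1) sin \<theta> - sin ((2\<tau> + 1) \<theta>)) / 2 > 0\<close>.\<close>

lemma root_radius_deriv_pos:
  assumes tau: "tau \<ge> 1" and x: "0 < x" "x \<le> angle_max tau"
  shows "\<exists>d. (root_radius tau has_real_derivative d) (at x) \<and> 0 < d"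
proof -
  note bounds = angle_max_bounds[OF tau x]
  define A where "A = real tau * x"
  define B where "B = real (tau + 1) * x"
  have sB: "sin B > 0" using bounds(5) by (simp add: B_def)
  define N where "N = real tau * cos A * sin B - real (tau + 1) * sin A * cos B"
  have "(root_radius tau has_real_derivative N / (sin B) ^ 2) (at x)"
    unfolding root_radius_def[abs_def] N_def A_def B_def using sB[unfolded B_def]
    by (auto intro!: derivative_eq_intros simp: power2_eq_square field_simps)
  moreover have "0 < N"
  proof -
    have "x = B - A" "real (2 * tau + 1) * x = A + B" by (simp_all add: A_def B_def algebra_simps)
    then have sx: "sin x = sin B * cos A - cos B * sin A"
        and s2x: "sin (real (2 * tau + 1) * x) = sin A * cos B + cos A * sin B"
      by (simp_all add: sin_diff sin_add)
    have "2 * N = real (2 * tau + 1) * sin x - sin (real (2 * tau + 1) * x)"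
      unfolding sx s2x N_def by (simp add: algebra_simps)
    moreover have "x < pi" using x bounds(2) tau by (smt (verit) mult_le_cancel_right1 of_nat_1 of_nat_le_iff le_add2)
    then have "\<bar>sin (real (2 * tau + 1) * x)\<bar> < real (2 * tau + 1) * sin x"
      using tau x by (intro abs_sin_mult_less) auto
    ultimately show ?thesis by linarith
  qed
  ultimately show ?thesis using sB by (intro exI[of _ "N / (sin B) ^ 2"]) simp
qed

lemma root_radius_strict_mono:
  assumes tau: "tau \<ge> 1" and ab: "0 < a" "a < b" "b \<le> angle_max tau"
  shows "root_radius tau a < root_radius tau b"
  by (rule DERIV_pos_imp_increasing[OF ab(2)]) (use ab in \<open>auto intro!: root_radius_deriv_pos[OF tau]\<close>)

lemma sin_mult_over_tendsto: "((\<lambda>y. sin (k * y) / y) \<longlongrightarrow> (k :: real)) (at 0)"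
proof -
  have "((\<lambda>y. sin (k * y)) has_field_derivative k) (at 0)"
    by (auto intro!: derivative_eq_intros)
  then show ?thesis by (simp add: has_field_derivative_iff)
qed

lemma lambda_of_angle_tendsto:
  assumes tau: "tau \<ge> 1"
  shows "(lambda_of_angle tau \<longlongrightarrow> lambda_th tau) (at_right 0)"
proof -
  have "((\<lambda>y. (sin (real tau * y) / y) ^ tau * (sin (1 * y) / y) / (sin (real (tau + 1) * y) / y) ^ (tau + 1))
      \<longlongrightarrow> real tau ^ tau * 1 / real (tau + 1) ^ (tau + 1)) (at_right 0)"
    by (intro tendsto_intros tendsto_mono[OF at_le sin_mult_over_tendsto]) auto
  moreover have "eventually (\<lambda>y. y \<in> {0<..<angle_max tau}) (at_right 0)"
    unfolding angle_max_def by (intro eventually_at_right_real) (auto simp: add_pos_nonneg)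
  then have "eventually (\<lambda>y. (sin (real tau * y) / y) ^ tau * (sin (1 * y) / y)
      / (sin (real (tau + 1) * y) / y) ^ (tau + 1) = lambda_of_angle tau y) (at_right 0)"
  proof eventually_elim
    case (elim y)
    then have "0 < y" "y \<le> angle_max tau" by auto
    from this angle_max_bounds[OF tau this] show ?case
      unfolding lambda_of_angle_def root_radius_def by (simp add: power_divide field_simps power_add)
  qed
  ultimately show ?thesis
    by (simp add: tendsto_cong lambda_th_def add.commute)
qed

lemma continuous_on_lambda_of_angle:
  assumes tau: "tau \<ge> 1" and ab: "0 < a" "b \<le> angle_max tau"
  shows "continuous_on {a..b} (lambda_of_angle tau)"
proof -
  have "sin (real (tau + 1) * x) \<noteq> 0" if "x \<in> {a..b}" for x
    using angle_max_bounds(5)[OF tau, of x] that ab by auto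
  then show ?thesis
    unfolding lambda_of_angle_def[abs_def] root_radius_def by (intro continuous_intros) auto
qed

lemma lambda_of_angle_max:
  assumes tau: "tau \<ge> 1"
  shows "lambda_of_angle tau (angle_max tau) = lambda_bar tau"
proof -
  define h where "h = pi / 2 * (1 / (2 * real tau + 1))"
  have th: "angle_max tau = 2 * h" by (simp add: angle_max_def h_def field_simps)
  have "real tau * angle_max tau = pi / 2 - h" "real (tau + 1) * angle_max tau = pi / 2 + h"
    by (simp_all add: angle_max_def h_def field_simps)
  then have s: "sin (real tau * angle_max tau) = cos h" "sin (real (tau + 1) * angle_max tau) = cos h"
    by (simp_all add: sin_cos_eq sin_add)
  have "0 < h" "h < pi / 2" using tau by (simp_all add: h_def field_simps)
  then have "cos h > 0" by (intro cos_gt_zero_pi) auto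
  then have "lambda_of_angle tau (angle_max tau) = 2 * sin h"
    unfolding lambda_of_angle_def root_radius_def s by (simp add: th sin_double)
  then show ?thesis by (simp add: lambda_bar_def h_def)
qed

lemma lambda_of_angle_attains:
  assumes tau: "tau \<ge> 1" and th1: "0 < th1" "th1 \<le> angle_max tau"
    and lam: "lambda_th tau < lam" "lam \<le> lambda_of_angle tau th1"
  obtains th where "0 < th" "th \<le> th1" "lambda_of_angle tau th = lam"
proof -
  have "eventually (\<lambda>y. lambda_of_angle tau y < lam) (at_right 0)"
    using order_tendstoD(2)[OF lambda_of_angle_tendsto[OF tau] lam(1)] .
  then obtain e where e: "0 < e" "\<And>y. 0 < y \<Longrightarrow> y < e \<Longrightarrow> lambda_of_angle tau y < lam"
    unfolding eventually_at_right[OF zero_less_one] by auto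
  define a where "a = min (e / 2) (th1 / 2)"
  have a: "0 < a" "a < e" "a < th1" using e th1 by (auto simp: a_def)
  have "\<exists>x\<ge>a. x \<le> th1 \<and> lambda_of_angle tau x = lam"
    using e(2)[OF a(1,2)] a lam(2)
    by (intro IVT' continuous_on_lambda_of_angle[OF tau a(1) th1(2)]) auto
  then obtain x where "a \<le> x" "x \<le> th1" "lambda_of_angle tau x = lam" by auto
  with a show thesis by (intro that) auto
qed

lemma rho_strict_increasing:
  assumes tau: "tau \<ge> 1" and ab: "lambda_th tau < a" "a < b" "b < lambda_bar tau"
  shows "rho tau a < rho tau b"
proof -
  have max: "0 < angle_max tau" "angle_max tau \<le> angle_max tau"
    by (simp_all add: angle_max_def add_pos_nonneg)
  obtain thb where thb: "0 < thb" "thb \<le> angle_max tau" "lambda_of_angle tau thb = b"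
    using lambda_of_angle_attains[OF tau max, of b] ab lambda_of_angle_max[OF tau] by auto
  obtain tha where tha: "0 < tha" "tha \<le> thb" "lambda_of_angle tau tha = a"
    using lambda_of_angle_attains[OF tau thb(1,2), of a] ab thb(3) by auto
  have "tha \<noteq> thb" using tha thb ab by auto
  then have "root_radius tau tha < root_radius tau thb"
    using root_radius_strict_mono[OF tau tha(1) _ thb(2)] tha(2) by simp
  then show ?thesis
    using rho_lambda_of_angle[OF tau tha(1)] rho_lambda_of_angle[OF tau thb(1,2)] tha thb by simp
qed

lemma lambda_th_le_inverse:
  assumes tau: "tau \<ge> 1"
  shows "lambda_th tau \<le> 1 / (2 * (real tau + 1))"
proof -
  have tp: "real tau > 0" using tau by simp
  have "- 1 \<le> 1 / real tau" using tp by (smt (verit) divide_pos_pos)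
  then have "1 + real tau * (1 / real tau) \<le> (1 + 1 / real tau) ^ tau"
    by (rule Bernoulli_inequality)
  then have "2 \<le> ((real tau + 1) / real tau) ^ tau" using tp by (simp add: field_simps)
  then have "2 * real tau ^ tau \<le> (real tau + 1) ^ tau"
    using tp by (simp add: power_divide le_divide_eq)
  then have "real tau ^ tau / (real tau + 1) ^ tau \<le> 1 / 2"
    by (simp add: divide_le_eq)
  then have "real tau ^ tau / (real tau + 1) ^ tau / (real tau + 1) \<le> 1 / 2 / (real tau + 1)"
    using tp by (intro divide_right_mono) simp_all
  also have "real tau ^ tau / (real tau + 1) ^ tau / (real tau + 1) = lambda_th tau"
    by (simp add: lambda_th_def)
  finally show ?thesis by simp
qed

lemma half_le_sin:
  assumes x: "0 \<le> x" "x \<le> pi / 3"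
  shows "x / 2 \<le> sin x"
proof -
  have "(\<lambda>y. sin y - y / 2) 0 \<le> (\<lambda>y. sin y - y / 2) x"
  proof (rule DERIV_nonneg_imp_increasing_open[of 0 x])
    fix y assume y: "0 < y" "y < x"
    have "((\<lambda>y. sin y - y / 2) has_real_derivative (cos y - 1 / 2)) (at y)"
      by (auto intro!: derivative_eq_intros)
    moreover have "cos (pi / 3) \<le> cos y" using y x by (intro cos_monotone_0_pi_le) auto
    then have "0 \<le> cos y - 1 / 2" by (simp add: cos_60)
    ultimately show "\<exists>d. ((\<lambda>y. sin y - y / 2) has_real_derivative d) (at y) \<and> 0 \<le> d" by blast
  qed (use x in \<open>auto intro!: continuous_intros\<close>)
  then show ?thesis by simp
qed

lemma lambda_th_le_lambda_bar:
  assumes tau: "tau \<ge> 1"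
  shows "lambda_th tau \<le> lambda_bar tau"
proof -
  define h where "h = pi / 2 * (1 / (2 * real tau + 1))"
  have "0 \<le> h" "h \<le> pi / 3" using tau by (simp_all add: h_def field_simps)
  then have sin_h: "h / 2 \<le> sin h" by (rule half_le_sin)
  have "lambda_th tau \<le> 1 / (2 * (real tau + 1))" by (rule lambda_th_le_inverse[OF tau])
  also have "\<dots> \<le> 1 * (1 / (2 * real tau + 1))" by (simp add: field_simps)
  also have "\<dots> \<le> h"
    unfolding h_def using pi_ge_two by (intro mult_right_mono) simp_all
  also have "\<dots> \<le> 2 * sin h" using sin_h by linarith
  also have "\<dots> = lambda_bar tau" by (simp add: lambda_bar_def h_def)
  finally show ?thesis .
qed

lemma rho_le_max_endpoints:
  assumes tau: "tau \<ge> 1" and x: "0 < a" "a \<le> x" "x \<le> b" "b < lambda_bar tau"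
  shows "rho tau x \<le> max (rho tau a) (rho tau b)"
proof -
  consider "x = a" | "x = b" | "a < x" "x \<le> lambda_th tau" | "lambda_th tau < x" "x < b"
    using x by linarith
  then show ?thesis
  proof cases
    case 3 then show ?thesis using rho_strict_decreasing[OF tau x(1), of x] by simp
  next
    case 4 then show ?thesis using rho_strict_increasing[OF tau _ _ x(4), of x] by simp
  qed simp_all
qed

section \<open>Eigenvalues of symmetric matrices\<close>

lemma symmetric_matrix_inner:
  fixes K :: "real^'n^'n"
  assumes "transpose K = K"
  shows "(K *v x) \<bullet> y = x \<bullet> (K *v y)"
  using transpose_matrix_vector[of K x] dot_lmul_matrix[of x K y] assms by simp

text \<open>The Cauchy--Schwarz argument for a positive semidefinite form: if \<open>\<langle>x, f x\<rangle> = 0\<close> and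
  \<open>w = f x \<noteq> 0\<close>, then the form is negative at \<open>x + t w\<close> for a small \<open>t < 0\<close>.\<close>

lemma selfadjoint_nonneg_form_zero_imp_zero:
  fixes f :: "'a::real_inner \<Rightarrow> 'a"
  assumes lin: "linear f" and adj: "\<And>u v. f u \<bullet> v = u \<bullet> f v"
    and nonneg: "\<And>y. 0 \<le> y \<bullet> f y" and zero: "x \<bullet> f x = 0"
  shows "f x = 0"
proof (rule ccontr)
  define w where "w = f x"
  assume "f x \<noteq> 0"
  then have b: "0 < w \<bullet> w" by (simp add: w_def)
  define c where "c = w \<bullet> f w"
  have c: "0 \<le> c" using nonneg by (simp add: c_def)
  define t where "t = - (w \<bullet> w) / (c + 1)"
  have t: "t < 0" using b c by (simp add: t_def)
  have "t * c > - (w \<bullet> w)"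
    using b c by (simp add: t_def field_simps)
  then have "t * (2 * (w \<bullet> w) + t * c) < 0"
    using t b by (intro mult_neg_pos) linarith+
  moreover have "(x + t *\<^sub>R w) \<bullet> f (x + t *\<^sub>R w) = t * (2 * (w \<bullet> w) + t * c)"
    using zero adj[of x w]
    by (simp add: linear_add[OF lin] linear_scale[OF lin] inner_add_left inner_add_right
        inner_commute c_def w_def algebra_simps)
  ultimately show False using nonneg[of "x + t *\<^sub>R w"] by simp
qed

lemma quadratic_form_le_sphere_scale:
  fixes K :: "real^'n^'n"
  assumes "\<And>y. norm y = 1 \<Longrightarrow> y \<bullet> (K *v y) \<le> mu"
  shows "y \<bullet> (K *v y) \<le> mu * (norm y)\<^sup>2"
proof (cases "y = 0")
  case False
  define y' where "y' = (1 / norm y) *\<^sub>R y"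
  have "norm y' = 1" using False by (simp add: y'_def)
  then have "y' \<bullet> (K *v y') \<le> mu" by (rule assms)
  then have "(1 / norm y)\<^sup>2 * (y \<bullet> (K *v y)) \<le> mu"
    by (simp add: y'_def matrix_vector_mult_scaleR power2_eq_square)
  then show ?thesis using False by (simp add: field_simps)
qed simp

text \<open>Rayleigh: the maximum of the quadratic form on the unit sphere is an eigenvalue.\<close>

lemma symmetric_matrix_max_eigenvalue:
  fixes K :: "real^'n^'n"
  assumes sym: "transpose K = K"
  obtains mu where "mu \<in> mat_spec K" "\<And>y. y \<bullet> (K *v y) \<le> mu * (norm y)\<^sup>2"
proof -
  have "continuous_on (sphere 0 1) (\<lambda>y::real^'n. y \<bullet> (K *v y))"
    by (intro continuous_intros matrix_vector_mult_linear_continuous_on[THEN continuous_on_subset]) auto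
  then obtain x :: "real^'n" where x: "norm x = 1" "\<And>y. norm y = 1 \<Longrightarrow> y \<bullet> (K *v y) \<le> x \<bullet> (K *v x)"
    using continuous_attains_sup[OF compact_sphere, of 0 1] by force
  define mu where "mu = x \<bullet> (K *v x)"
  have bound: "y \<bullet> (K *v y) \<le> mu * (norm y)\<^sup>2" for y
    unfolding mu_def by (rule quadratic_form_le_sphere_scale) (use x in auto)
  have "mu *\<^sub>R x - K *v x = 0"
  proof (rule selfadjoint_nonneg_form_zero_imp_zero[where f = "\<lambda>y. mu *\<^sub>R y - K *v y"])
    show "linear (\<lambda>y. mu *\<^sub>R y - K *v y)"
      by (intro linear_compose_sub linear_scaleR matrix_vector_mul_linear)
    show "(mu *\<^sub>R u - K *v u) \<bullet> v = u \<bullet> (mu *\<^sub>R v - K *v v)" for u v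
      using symmetric_matrix_inner[OF sym, of u v] by (simp add: inner_diff_left inner_diff_right)
    show "0 \<le> y \<bullet> (mu *\<^sub>R y - K *v y)" for y
      using bound[of y] by (simp add: inner_diff_right power2_norm_eq_inner)
    show "x \<bullet> (mu *\<^sub>R x - K *v x) = 0"
      using x(1) by (simp add: inner_diff_right mu_def power2_norm_eq_inner[symmetric])
  qed
  moreover have "x \<noteq> 0" using x(1) by auto
  ultimately have "mu \<in> mat_spec K" by (auto simp: mat_spec_def)
  then show thesis using bound by (rule that)
qed

lemma matrix_vector_mult_uminus:
  fixes K :: "'a::ring_1^'n^'m"
  shows "(- K) *v v = - (K *v v)"
  using matrix_vector_mult_diff_rdistrib[of 0 K v] by simp

lemma mat_spec_uminus:
  fixes K :: "real^'n^'n"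
  shows "l \<in> mat_spec (- K) \<longleftrightarrow> - l \<in> mat_spec K"
proof -
  have "- (K *v v) = l *\<^sub>R v \<longleftrightarrow> K *v v = (- l) *\<^sub>R v" for v :: "real^'n"
    by (auto simp: minus_equation_iff[of "K *v v"])
  then show ?thesis unfolding mat_spec_def matrix_vector_mult_uminus by simp
qed

lemma symmetric_matrix_nonzero_eigenvalue:
  fixes K :: "real^'n^'n"
  assumes sym: "transpose K = K" and nz: "K *v v \<noteq> 0"
  obtains l where "l \<in> mat_spec K" "l \<noteq> 0"
proof (rule ccontr)
  assume "\<not> thesis"
  then have only_zero: "l \<in> mat_spec K \<Longrightarrow> l = 0" for l using that by blast
  obtain mu1 where "mu1 \<in> mat_spec K" and upper: "\<And>y. y \<bullet> (K *v y) \<le> mu1 * (norm y)\<^sup>2"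
    using symmetric_matrix_max_eigenvalue[OF sym] by blast
  have "transpose (- K) = - K" using sym transpose_scalar[of "- 1" K] by simp
  then obtain mu2 where "mu2 \<in> mat_spec (- K)" and lower: "\<And>y. y \<bullet> (- K *v y) \<le> mu2 * (norm y)\<^sup>2"
    using symmetric_matrix_max_eigenvalue by blast
  have "mu1 = 0" "mu2 = 0"
    using only_zero[of mu1] only_zero[of "- mu2"] \<open>mu1 \<in> mat_spec K\<close> \<open>mu2 \<in> mat_spec (- K)\<close>
    by (auto simp: mat_spec_uminus)
  then have form_zero: "y \<bullet> (K *v y) = 0" for y
    using upper[of y] lower[of y] by (simp add: matrix_vector_mult_uminus)
  have "K *v v = 0"
  proof (rule selfadjoint_nonneg_form_zero_imp_zero[where f = "(*v) K"])
    show "linear ((*v) K)" by (rule matrix_vector_mul_linear)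
    show "(K *v u) \<bullet> w = u \<bullet> (K *v w)" for u w by (rule symmetric_matrix_inner[OF sym])
    show "0 \<le> y \<bullet> (K *v y)" for y by (simp add: form_zero)
    show "v \<bullet> (K *v v) = 0" by (rule form_zero)
  qed
  with nz show False ..
qed

lemma finite_mat_spec:
  fixes K :: "real^'n^'n"
  assumes sym: "transpose K = K"
  shows "finite (mat_spec K)"
proof -
  define ev where "ev l = (SOME v. v \<noteq> 0 \<and> K *v v = l *\<^sub>R v)" for l
  have ev: "ev l \<noteq> 0 \<and> K *v ev l = l *\<^sub>R ev l" if "l \<in> mat_spec K" for l
    unfolding ev_def by (rule someI_ex) (use that in \<open>auto simp: mat_spec_def\<close>)
  have inj: "inj_on ev (mat_spec K)"
  proof (rule inj_onI)
    fix l1 l2 assume l: "l1 \<in> mat_spec K" "l2 \<in> mat_spec K" "ev l1 = ev l2"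
    then have "l1 *\<^sub>R ev l1 = l2 *\<^sub>R ev l1" using ev[OF l(1)] ev[OF l(2)] by metis
    then show "l1 = l2" using ev[OF l(1)] by simp
  qed
  have "pairwise orthogonal (ev ` mat_spec K)"
  proof (rule pairwiseI)
    fix x y assume "x \<in> ev ` mat_spec K" "y \<in> ev ` mat_spec K" "x \<noteq> y"
    then obtain l1 l2 where l: "l1 \<in> mat_spec K" "l2 \<in> mat_spec K" "x = ev l1" "y = ev l2" "l1 \<noteq> l2"
      by auto
    have "l1 * (x \<bullet> y) = (K *v x) \<bullet> y" using ev[OF l(1)] l(3) by simp
    also have "\<dots> = x \<bullet> (K *v y)" by (rule symmetric_matrix_inner[OF sym])
    also have "\<dots> = l2 * (x \<bullet> y)" using ev[OF l(2)] l(4) by simp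
    finally show "orthogonal x y" using l(5) by (simp add: orthogonal_def algebra_simps)
  qed
  moreover have "0 \<notin> ev ` mat_spec K" using ev by force
  ultimately have "independent (ev ` mat_spec K)" by (rule pairwise_orthogonal_independent)
  then have "finite (ev ` mat_spec K)" by (rule finiteI_independent)
  then show ?thesis using inj by (rule finite_imageD)
qed

section \<open>The convergence rate\<close>

lemma Max_image_quasiconvex:
  fixes f :: "'a::linorder \<Rightarrow> 'b::linorder"
  assumes "finite S" "S \<noteq> {}"
    and quasi: "\<And>a x b. a \<in> S \<Longrightarrow> b \<in> S \<Longrightarrow> a \<le> x \<Longrightarrow> x \<le> b \<Longrightarrow> f x \<le> max (f a) (f b)"
  shows "Max (f ` S) = max (f (Min S)) (f (Max S))"
proof (rule antisym)
  show "Max (f ` S) \<le> max (f (Min S)) (f (Max S))"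
    using assms by (simp add: quasi)
  show "max (f (Min S)) (f (Max S)) \<le> Max (f ` S)"
    using assms by simp
qed

theorem proposition2:
  fixes tau :: nat
  assumes "tau \<ge> 1"
  shows "(\<exists>lth. 0 \<le> lth \<and> lth \<le> lambda_bar tau
            \<and> (\<forall>a b. 0 < a \<and> a < b \<and> b < lth \<longrightarrow> rho tau b < rho tau a)
            \<and> (\<forall>a b. lth < a \<and> a < b \<and> b < lambda_bar tau \<longrightarrow> rho tau a < rho tau b))
      \<and> (\<forall>K :: real^'n^'n.
            CARD('n) \<ge> 2 \<and> transpose K = K \<and> 0 \<in> mat_spec K
            \<and> dim {v. K *v v = 0} = 1
            \<and> mat_spec K \<subseteq> {0..<lambda_bar tau}
          \<longrightarrow> conv_rate tau K =
                max (rho tau (Min (mat_spec K - {0}))) (rho tau (Max (mat_spec K - {0}))))"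
proof (intro conjI allI impI)
  show "\<exists>lth. 0 \<le> lth \<and> lth \<le> lambda_bar tau
            \<and> (\<forall>a b. 0 < a \<and> a < b \<and> b < lth \<longrightarrow> rho tau b < rho tau a)
            \<and> (\<forall>a b. lth < a \<and> a < b \<and> b < lambda_bar tau \<longrightarrow> rho tau a < rho tau b)"
    using lambda_th_le_lambda_bar[OF assms] rho_strict_decreasing[OF assms] rho_strict_increasing[OF assms]
    by (intro exI[of _ "lambda_th tau"]) (auto simp: lambda_th_def)
next
  fix K :: "real^'n^'n"
  assume K: "CARD('n) \<ge> 2 \<and> transpose K = K \<and> 0 \<in> mat_spec K
            \<and> dim {v. K *v v = 0} = 1 \<and> mat_spec K \<subseteq> {0..<lambda_bar tau}"
  then have sym: "transpose K = K" by simp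
  have "{v. K *v v = 0} \<noteq> UNIV" using K dim_UNIV[where 'a = "real^'n"] by auto
  then obtain v where "K *v v \<noteq> 0" by auto
  then obtain l where l: "l \<in> mat_spec K" "l \<noteq> 0"
    by (rule symmetric_matrix_nonzero_eigenvalue[OF sym])
  define S where "S = mat_spec K - {0}"
  have "finite S" "S \<noteq> {}" using finite_mat_spec[OF sym] l by (auto simp: S_def)
  moreover have S_range: "0 < x \<and> x < lambda_bar tau" if "x \<in> S" for x
    using that K by (auto simp: S_def)
  ultimately have "Max (rho tau ` S) = max (rho tau (Min S)) (rho tau (Max S))"
    by (intro Max_image_quasiconvex rho_le_max_endpoints[OF assms]) (auto dest: S_range)
  then show "conv_rate tau K =
      max (rho tau (Min (mat_spec K - {0}))) (rho tau (Max (mat_spec K - {0})))"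
    by (simp add: conv_rate_def S_def)
qed

end
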